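(* Fix $1\le p<2$. There is a constant $U_p>0$ depending only on $p$ such that for every integer $n\ge3$, if $X_1,\dots,X_n$ are independent random variables with distribution $\mathcal{D}_p$, then $$\Pr\Big[\sum_{i=1}^n|X_i|^p\le U_p\,n\log n\Big]\ge1-\frac{\log\log n}{\log n}.$$
   Context: $\log$ denotes the natural logarithm. $\mathcal{D}_p$ denotes the standard symmetric $p$-stable distribution: if $Y_1,\dots,Y_m$ are i.i.d. $\sim\mathcal{D}_p$ and $a\in\mathbb{R}^m$, then $\sum_ia_iY_i$ has the same distribution as $(\sum_i|a_i|^p)^{1/p}Y$ with $Y\sim\mathcal{D}_p$; $\mathcal{D}_1$ is the standard Cauchy distribution. *)

theory Defs
  imports "HOL-Probability.Probability"
begin

text \<open>For p = 1 this is the standard Cauchy distribution.\<close>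
definition std_sym_stable :: "real \<Rightarrow> real measure \<Rightarrow> bool" where
  "std_sym_stable p D \<longleftrightarrow>
     prob_space D \<and> sets D = sets borel \<and>
     (\<forall>t. char D t = complex_of_real (exp (- (\<bar>t\<bar> powr p))))"

end

theory Submission
  imports Defs
begin

(* For the standard symmetric p-stable law the characteristic function is exp(-|t|^p), so the
   truncation inequality  u P(|X| \<ge> 2/u) \<le> \<integral>_{-u}^{u} (1 - \<phi>(t)) dt  yields the weak-type bound
   P(|X|^p \<ge> t) \<le> 8/t.  Truncate Y_i = |X_i|^p at a dyadic level L between T and 2T, where
   T = 4096 n ln n: the truncated variable has mean O(log T) and second moment O(T).  Hence, by
   Chebyshev, the truncated sum exceeds T with probability O(n/T), and some Y_i reaches L with
   probability at most 8n/L.  Both are O(1/ln n), below ln ln n / ln n. *)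

definition one_minus_cos_integral :: "real \<Rightarrow> real \<Rightarrow> real" where
  "one_minus_cos_integral u x = (if x = 0 then 0 else 2 * (u - sin (u * x) / x))"

lemma interval_integral_one_minus_iexp:
  fixes u x :: real
  assumes "u > 0"
  shows "(CLBINT t:{-u..u}. 1 - iexp (t * x)) = one_minus_cos_integral u x"
proof (cases "x = 0")
  case False
  have "(CLBINT t:{-u..u}. 1 - iexp (t * x)) = (CLBINT t=-u..u. 1 - iexp (t * x))"
    using assms by (subst interval_integral_Icc) auto
  also have "\<dots> = (CLBINT t=-u..ereal 0. 1 - iexp (t * x)) + (CLBINT t=ereal 0..u. 1 - iexp (t * x))"
    using assms by (subst interval_integral_sum; force simp add: interval_integrable_isCont)
  also have "\<dots> = (CLBINT t=ereal 0..u. 1 - iexp (t * -x)) + (CLBINT t=ereal 0..u. 1 - iexp (t * x))"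
    by (subst interval_integral_reflect) auto
  also have "\<dots> = (CLBINT t=ereal 0..u. (1 - iexp (t * -x)) + (1 - iexp (t * x)))"
    by (subst interval_lebesgue_integral_add(2)[symmetric]) (auto simp: interval_integrable_isCont)
  also have "\<dots> = (LBINT t=ereal 0..u. 2 - 2 * cos (t * x))"
    unfolding exp_Euler cos_of_real by (simp flip: interval_lebesgue_integral_of_real)
  also have "\<dots> = 2 * u - 2 * sin (u * x) / x"
    by (subst interval_lebesgue_integral_diff)
       (auto intro!: interval_integrable_isCont
             simp: interval_lebesgue_integral_of_real integral_cos[OF \<open>x \<noteq> 0\<close>] mult.commute[of _ x])
  finally show ?thesis
    using False by (simp add: one_minus_cos_integral_def field_simps)
qed (simp add: one_minus_cos_integral_def)

lemma indicator_le_one_minus_cos_integral: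
  fixes u x :: real
  assumes "u > 0"
  shows "u * indicator {x. 2 / u \<le> \<bar>x\<bar>} x \<le> one_minus_cos_integral u x"
proof -
  have "\<bar>sin (u * x)\<bar> \<le> \<bar>u * x\<bar>"
    by (rule abs_sin_x_le_abs_x)
  hence "0 \<le> u - sin (u * x) / x" if "x \<noteq> 0"
    using that assms by (auto simp: abs_mult divide_simps split: abs_split if_splits)
  moreover have "u \<le> 2 * (u - sin (u * x) / x)" if "2 / u \<le> \<bar>x\<bar>"
  proof -
    have "2 \<le> u * \<bar>x\<bar>"
      using that assms by (simp add: field_simps)
    hence "2 * \<bar>sin (u * x)\<bar> \<le> u * \<bar>x\<bar>"
      using abs_sin_le_one[of "u * x"] by linarith
    hence "2 * \<bar>sin (u * x) / x\<bar> \<le> u"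
      using that assms by (auto simp: abs_divide divide_simps)
    thus ?thesis
      using abs_ge_self[of "sin (u * x) / x"] by argo
  qed
  ultimately show ?thesis
    using assms by (auto simp: indicator_def one_minus_cos_integral_def)
qed

lemma (in real_distribution) integral_one_minus_char:
  assumes "u > 0"
  shows "integrable M (one_minus_cos_integral u)"
    and "(CLBINT t:{-u..u}. 1 - char M t) = complex_of_real (LINT x|M. one_minus_cos_integral u x)"
proof -
  interpret P: pair_sigma_finite M lborel ..
  have integrable_pair: "set_integrable (M \<Otimes>\<^sub>M lborel) (UNIV \<times> {-u..u})
      (\<lambda>a. 1 - exp (\<i> * complex_of_real (snd a * fst a)))"
    using assms unfolding set_integrable_def
    by (intro integrableI_bounded_set_indicator[where B=2])
       (auto simp: lborel.emeasure_pair_measure_Times ennreal_mult_less_top not_less top_unique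
             split: split_indicator intro!: order_trans[OF norm_triangle_ineq4])
  have "complex_integrable M (\<lambda>x. CLBINT t:{-u..u}. 1 - iexp (snd (x, t) * fst (x, t)))"
    using integrable_pair unfolding set_integrable_def set_lebesgue_integral_def
    by (intro P.integrable_fst) (simp add: indicator_times split_beta')
  thus "integrable M (one_minus_cos_integral u)"
    using assms by (simp add: interval_integral_one_minus_iexp complex_of_real_integrable_eq del: of_real_mult)
  have prob_univ: "prob UNIV = 1"
    using prob_space space_eq_univ by simp
  have integrable_iexp: "complex_integrable M (\<lambda>x. iexp (t * x))" for t
    by (rule integrable_const_bound[where B=1]) auto
  have "(CLBINT t:{-u..u}. 1 - char M t) = (CLBINT t:{-u..u}. (CLINT x|M. 1 - iexp (t * x)))"
    unfolding char_def
    by (rule set_lebesgue_integral_cong) (auto simp: integrable_iexp prob_univ simp del: of_real_mult)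
  also have "\<dots> = (CLBINT t. (CLINT x|M. indicator {-u..u} t *\<^sub>R (1 - iexp (t * x))))"
    unfolding set_lebesgue_integral_def
    by (rule Bochner_Integration.integral_cong) (auto split: split_indicator)
  also have "\<dots> = (CLINT x|M. (CLBINT t:{-u..u}. 1 - iexp (t * x)))"
    using integrable_pair
    by (subst P.Fubini_integral)
       (auto simp: indicator_times split_beta' set_integrable_def set_lebesgue_integral_def)
  also have "\<dots> = complex_of_real (LINT x|M. one_minus_cos_integral u x)"
    using assms by (simp add: interval_integral_one_minus_iexp del: of_real_mult)
  finally show "(CLBINT t:{-u..u}. 1 - char M t) = complex_of_real (LINT x|M. one_minus_cos_integral u x)" .
qed

(* The truncation inequality from the proof of Levy's continuity theorem in HOL-Probability.Levy,
   where it is not available as a separate fact. *)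
lemma (in real_distribution) tail_le_char_integral:
  assumes "u > 0"
  shows "u * measure M {x. 2 / u \<le> \<bar>x\<bar>} \<le> Re (CLBINT t:{-u..u}. 1 - char M t)"
proof -
  have "u * measure M {x. 2 / u \<le> \<bar>x\<bar>} = (LINT x|M. u * indicator {x. 2 / u \<le> \<bar>x\<bar>} x)"
    by (simp add: emeasure_eq_measure)
  also have "\<dots> \<le> (LINT x|M. one_minus_cos_integral u x)"
    using integral_one_minus_char(1)[OF assms] indicator_le_one_minus_cos_integral[OF assms]
    by (intro integral_mono) (auto simp: emeasure_eq_measure)
  finally show ?thesis
    using integral_one_minus_char(2)[OF assms] by simp
qed

lemma std_sym_stable_real_distribution:
  "std_sym_stable p D \<Longrightarrow> real_distribution D"
  by (simp add: std_sym_stable_def real_distribution_def real_distribution_axioms_def)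

lemma std_sym_stable_char_integral_le:
  assumes "std_sym_stable p D" "p > 0" "u > 0"
  shows "Re (CLBINT t:{-u..u}. 1 - char D t) \<le> 2 * u * u powr p"
proof -
  have "(CLBINT t:{-u..u}. 1 - char D t) = (CLBINT t:{-u..u}. complex_of_real (1 - exp (- (\<bar>t\<bar> powr p))))"
    using assms(1) unfolding std_sym_stable_def by simp
  also have "\<dots> = complex_of_real (LBINT t:{-u..u}. 1 - exp (- (\<bar>t\<bar> powr p)))"
    by (rule set_integral_complex_of_real)
  finally have "Re (CLBINT t:{-u..u}. 1 - char D t) = (LBINT t:{-u..u}. 1 - exp (- (\<bar>t\<bar> powr p)))"
    by simp
  also have "\<dots> \<le> (LBINT t:{-u..u}. u powr p)"
  proof (rule set_integral_mono)
    show "set_integrable lborel {-u..u} (\<lambda>t. 1 - exp (- (\<bar>t\<bar> powr p)))"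
      using assms(2) by (intro borel_integrable_atLeastAtMost' continuous_intros continuous_on_powr') auto
    show "set_integrable lborel {-u..u} (\<lambda>t. u powr p)"
      by (intro borel_integrable_atLeastAtMost' continuous_intros)
    fix t assume "t \<in> {-u..u}"
    have "1 - exp (- (\<bar>t\<bar> powr p)) \<le> \<bar>t\<bar> powr p"
      using exp_ge_add_one_self[of "- (\<bar>t\<bar> powr p)"] by simp
    also have "\<dots> \<le> u powr p"
      using \<open>t \<in> {-u..u}\<close> assms by (intro powr_mono2) auto
    finally show "1 - exp (- (\<bar>t\<bar> powr p)) \<le> u powr p" .
  qed
  also have "\<dots> = 2 * u * u powr p"
    using assms by (simp add: set_integral_const)
  finally show ?thesis .
qed

lemma std_sym_stable_tail:
  assumes "std_sym_stable p D" "0 < p" "p \<le> 2" "s > 0"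
  shows "measure D {x. s \<le> \<bar>x\<bar>} \<le> 8 * s powr (-p)"
proof -
  interpret real_distribution D
    using assms(1) by (rule std_sym_stable_real_distribution)
  define u where "u = 2 / s"
  have "u > 0" using assms by (simp add: u_def)
  have "u * measure D {x. s \<le> \<bar>x\<bar>} \<le> u * (2 * u powr p)"
    using tail_le_char_integral[OF \<open>u > 0\<close>] std_sym_stable_char_integral_le[OF assms(1,2) \<open>u > 0\<close>]
    by (simp add: u_def)
  hence "measure D {x. s \<le> \<bar>x\<bar>} \<le> 2 * u powr p"
    using \<open>u > 0\<close> by simp
  also have "\<dots> = 2 * 2 powr p * s powr (-p)"
    using assms by (simp add: u_def powr_divide powr_minus_divide)
  also have "\<dots> \<le> 2 * 2 powr 2 * s powr (-p)"
    using assms by (intro mult_right_mono mult_left_mono powr_mono) auto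
  finally show ?thesis by simp
qed

lemma std_sym_stable_powr_tail:
  assumes "std_sym_stable p D" "0 < p" "p \<le> 2" "t > 0"
  shows "measure D {x\<in>space D. t \<le> \<bar>x\<bar> powr p} \<le> 8 / t"
proof -
  interpret real_distribution D
    using assms(1) by (rule std_sym_stable_real_distribution)
  define s where "s = t powr (1 / p)"
  have "s > 0" using assms by (simp add: s_def)
  have "{x\<in>space D. t \<le> \<bar>x\<bar> powr p} \<subseteq> {x. s \<le> \<bar>x\<bar>}"
  proof safe
    fix x assume "t \<le> \<bar>x\<bar> powr p"
    hence "t powr (1 / p) \<le> (\<bar>x\<bar> powr p) powr (1 / p)"
      using assms by (intro powr_mono2) auto
    thus "s \<le> \<bar>x\<bar>"
      using assms by (simp add: s_def powr_powr)
  qed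
  hence "measure D {x\<in>space D. t \<le> \<bar>x\<bar> powr p} \<le> measure D {x. s \<le> \<bar>x\<bar>}"
    by (intro finite_measure_mono) auto
  also have "\<dots> \<le> 8 * s powr (-p)"
    using std_sym_stable_tail[OF assms(1-3) \<open>s > 0\<close>] .
  also have "s powr (-p) = 1 / t"
    using assms by (simp add: s_def powr_powr powr_minus_divide)
  finally show ?thesis by simp
qed

(* A discrete layer-cake estimate: f (min y 2^K) telescopes over the dyadic levels 2^k \<le> y. *)
lemma mono_on_min_pow2_le_sum:
  fixes f :: "real \<Rightarrow> real"
  assumes f: "mono_on {0..} f" and "0 \<le> y"
  shows "f (min y (2^K)) \<le> f 1 + (\<Sum>k<K. (f (2^Suc k) - f (2^k)) * indicator {2^k..} y)"
proof (induction K)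
  case 0
  show ?case
    using \<open>0 \<le> y\<close> by (auto intro!: mono_onD[OF f])
next
  case (Suc K)
  show ?case
  proof (cases "2^K \<le> y")
    case True
    have "f (min y (2^Suc K)) \<le> f (2^Suc K)"
      using \<open>0 \<le> y\<close> by (auto intro!: mono_onD[OF f])
    moreover have "min y (2^K) = 2^K"
      using True by simp
    ultimately show ?thesis
      using Suc.IH True by simp
  next
    case False
    moreover have "(2::real)^K \<le> 2^Suc K"
      by simp
    ultimately have "min y (2^Suc K) = min y (2^K)"
      by (metis min_absorb1 not_le order.strict_implies_order order.strict_trans2)
    then show ?thesis
      using Suc.IH False by simp
  qed
qed

lemma (in prob_space) expectation_truncated_le:
  fixes f :: "real \<Rightarrow> real"
  assumes [measurable]: "Y \<in> borel_measurable M" "f \<in> borel_measurable borel"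
    and f: "mono_on {0..} f" and Y_nonneg: "\<And>x. 0 \<le> Y x"
    and tail: "\<And>t. t > 0 \<Longrightarrow> prob {x\<in>space M. t \<le> Y x} \<le> c / t"
  shows "expectation (\<lambda>x. f (min (Y x) (2^K))) \<le> f 1 + (\<Sum>k<K. (f (2^Suc k) - f (2^k)) * (c / 2^k))"
proof -
  have [measurable]: "{x\<in>space M. 2^k \<le> Y x} \<in> sets M" for k :: nat
    by measurable
  have bounded: "\<bar>f (min (Y x) (2^K))\<bar> \<le> \<bar>f 0\<bar> + \<bar>f (2^K)\<bar>" for x
  proof -
    have "f 0 \<le> f (min (Y x) (2^K))" "f (min (Y x) (2^K)) \<le> f (2^K)"
      using Y_nonneg[of x] by (auto intro!: mono_onD[OF f])
    thus ?thesis by linarith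
  qed
  have "expectation (\<lambda>x. f (min (Y x) (2^K)))
      \<le> expectation (\<lambda>x. f 1 + (\<Sum>k<K. (f (2^Suc k) - f (2^k)) * indicator {x\<in>space M. 2^k \<le> Y x} x))"
  proof (rule integral_mono)
    show "integrable M (\<lambda>x. f (min (Y x) (2^K)))"
      using bounded by (intro integrable_const_bound[where B="\<bar>f 0\<bar> + \<bar>f (2^K)\<bar>"]) auto
    show "integrable M (\<lambda>x. f 1 + (\<Sum>k<K. (f (2^Suc k) - f (2^k)) * indicator {x\<in>space M. 2^k \<le> Y x} x))"
      by (intro Bochner_Integration.integrable_add Bochner_Integration.integrable_sum
            integrable_mult_right integrable_real_indicator) (auto simp: emeasure_eq_measure)
    fix x assume "x \<in> space M"
    thus "f (min (Y x) (2^K)) \<le> f 1 + (\<Sum>k<K. (f (2^Suc k) - f (2^k)) * indicator {x\<in>space M. 2^k \<le> Y x} x)"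
      using mono_on_min_pow2_le_sum[OF f Y_nonneg, of x K] by (simp add: indicator_def)
  qed
  also have "\<dots> = f 1 + (\<Sum>k<K. (f (2^Suc k) - f (2^k)) * prob {x\<in>space M. 2^k \<le> Y x})"
    by (simp add: Bochner_Integration.integral_sum emeasure_eq_measure prob_space del: sum_mult_indicator)
  also have "\<dots> \<le> f 1 + (\<Sum>k<K. (f (2^Suc k) - f (2^k)) * (c / 2^k))"
  proof (intro add_left_mono sum_mono mult_left_mono)
    fix k assume "k \<in> {..<K}"
    show "prob {x\<in>space M. 2^k \<le> Y x} \<le> c / 2^k"
      by (rule tail) simp
    show "0 \<le> f (2^Suc k) - f (2^k)"
      using mono_onD[OF f, of "2^k" "2^Suc k"] by simp
  qed
  finally show ?thesis .
qed

lemma (in prob_space) expectation_truncated_le_log: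
  assumes "Y \<in> borel_measurable M" "\<And>x. 0 \<le> Y x"
    and "\<And>t. t > 0 \<Longrightarrow> prob {x\<in>space M. t \<le> Y x} \<le> c / t"
  shows "expectation (\<lambda>x. min (Y x) (2^K)) \<le> 1 + c * K"
  using expectation_truncated_le[where f="\<lambda>y. y", OF assms(1) _ _ assms(2,3)]
  by (simp add: mono_on_def mult.commute)

lemma (in prob_space) expectation_truncated_square_le:
  assumes "Y \<in> borel_measurable M" "\<And>x. 0 \<le> Y x" "0 \<le> c"
    and "\<And>t. t > 0 \<Longrightarrow> prob {x\<in>space M. t \<le> Y x} \<le> c / t"
  shows "expectation (\<lambda>x. (min (Y x) (2^K))\<^sup>2) \<le> 1 + 3 * c * 2^K"
proof -
  have "expectation (\<lambda>x. (min (Y x) (2^K))\<^sup>2) \<le> 1 + (\<Sum>k<K. ((2^Suc k)\<^sup>2 - (2^k)\<^sup>2) * (c / 2^k))"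
    using expectation_truncated_le[where f="\<lambda>y. y\<^sup>2", OF assms(1) _ _ assms(2,4)]
    by (simp add: mono_on_def power_mono)
  also have "(\<Sum>k<K. ((2^Suc k)\<^sup>2 - (2^k)\<^sup>2) * (c / 2^k)) = 3 * c * (\<Sum>k<K. 2^k :: real)"
    by (simp add: sum_distrib_left power2_eq_square mult_ac)
  also have "\<dots> \<le> 3 * c * 2^K"
    using assms(3) by (intro mult_left_mono) (auto simp: sum_gp_strict)
  finally show ?thesis by simp
qed

lemma integral_PiM_coordinate:
  fixes h :: "'a \<Rightarrow> real"
  assumes "prob_space D" "i \<in> I" "h \<in> borel_measurable D"
  shows "(LINT x|PiM I (\<lambda>_. D). h (x i)) = (LINT y|D. h y)"
proof -
  have "(LINT x|PiM I (\<lambda>_. D). h (x i)) = (LINT y|distr (PiM I (\<lambda>_. D)) D (\<lambda>x. x i). h y)"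
    using assms(2,3) by (subst integral_distr) auto
  also have "distr (PiM I (\<lambda>_. D)) D (\<lambda>x. x i) = D"
    using assms by (intro distr_PiM_component) auto
  finally show ?thesis .
qed

lemma measure_PiM_coordinate:
  assumes "prob_space D" "i \<in> I" "A \<in> sets D"
  shows "measure (PiM I (\<lambda>_. D)) {x\<in>space (PiM I (\<lambda>_. D)). x i \<in> A} = measure D A"
proof -
  have "measure (PiM I (\<lambda>_. D)) {x\<in>space (PiM I (\<lambda>_. D)). x i \<in> A}
      = measure (distr (PiM I (\<lambda>_. D)) D (\<lambda>x. x i)) A"
    using assms by (subst measure_distr) (auto simp: vimage_def Int_def conj_commute)
  also have "distr (PiM I (\<lambda>_. D)) D (\<lambda>x. x i) = D"
    using assms by (intro distr_PiM_component) auto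
  finally show ?thesis .
qed

lemma measure_PiM_ex_coordinate_le:
  assumes "prob_space D" "finite I" "A \<in> sets D"
  shows "measure (PiM I (\<lambda>_. D)) {x\<in>space (PiM I (\<lambda>_. D)). \<exists>i\<in>I. x i \<in> A} \<le> card I * measure D A"
proof -
  interpret prob_space "PiM I (\<lambda>_. D)"
    using assms(1) by (rule prob_space_PiM)
  have "{x\<in>space (PiM I (\<lambda>_. D)). \<exists>i\<in>I. x i \<in> A} = (\<Union>i\<in>I. {x\<in>space (PiM I (\<lambda>_. D)). x i \<in> A})"
    by auto
  also have "prob \<dots> \<le> (\<Sum>i\<in>I. prob {x\<in>space (PiM I (\<lambda>_. D)). x i \<in> A})"
    using assms by (intro finite_measure_subadditive_finite) auto
  also have "\<dots> = card I * measure D A"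
    using assms by (simp add: measure_PiM_coordinate)
  finally show ?thesis .
qed

lemma prod_eq_two_points:
  assumes "finite I" "i \<in> I" "j \<in> I" "i \<noteq> j" "\<And>k. k \<in> I \<Longrightarrow> k \<noteq> i \<Longrightarrow> k \<noteq> j \<Longrightarrow> f k = 1"
  shows "prod f I = f i * f j"
proof -
  have "prod f I = f i * (f j * prod f (I - {i} - {j}))"
    using assms(1-4) by (simp add: prod.remove[of I i] prod.remove[of "I - {i}" j])
  also have "prod f (I - {i} - {j}) = 1"
    using assms(5) by (intro prod.neutral) auto
  finally show ?thesis by simp
qed

lemma integral_PiM_coordinate_pair:
  fixes g h :: "'a \<Rightarrow> real"
  assumes D: "prob_space D" and I: "finite I" "i \<in> I" "j \<in> I" "i \<noteq> j"
    and g: "integrable D g" and h: "integrable D h"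
  shows "(LINT x|PiM I (\<lambda>_. D). g (x i) * h (x j)) = (LINT y|D. g y) * (LINT y|D. h y)"
proof -
  interpret product_sigma_finite "\<lambda>_. D"
    using D by (simp add: product_sigma_finite_def prob_space_imp_sigma_finite)
  define f where "f k = (if k = i then g else if k = j then h else (\<lambda>_. 1))" for k
  have "(LINT x|PiM I (\<lambda>_. D). (\<Prod>k\<in>I. f k (x k))) = (\<Prod>k\<in>I. LINT y|D. f k y)"
    using I g h D by (intro product_integral_prod) (auto simp: f_def prob_space.finite_measure finite_measure.integrable_const)
  moreover have "(\<Prod>k\<in>I. f k (x k)) = g (x i) * h (x j)" for x
    using I by (subst prod_eq_two_points[of I i j]) (auto simp: f_def)
  moreover have "(\<Prod>k\<in>I. LINT y|D. f k y) = (LINT y|D. g y) * (LINT y|D. h y)"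
    using I D by (subst prod_eq_two_points[of I i j]) (auto simp: f_def prob_space.prob_space)
  ultimately show ?thesis
    by simp
qed

lemma mean_variance_PiM_sum:
  fixes g :: "'a \<Rightarrow> real"
  assumes D: "prob_space D" and I: "finite I" and g[measurable]: "g \<in> borel_measurable D"
    and bounded: "\<And>y. \<bar>g y\<bar> \<le> B"
  defines "S \<equiv> \<lambda>x. \<Sum>i\<in>I. g (x i)"
  shows "integrable (PiM I (\<lambda>_. D)) (\<lambda>x. (S x)\<^sup>2)"
    and "(LINT x|PiM I (\<lambda>_. D). S x) = card I * (LINT y|D. g y)"
    and "(LINT x|PiM I (\<lambda>_. D). (S x - card I * (LINT y|D. g y))\<^sup>2)
           = card I * ((LINT y|D. (g y)\<^sup>2) - (LINT y|D. g y)\<^sup>2)"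
proof -
  define M where "M = PiM I (\<lambda>_. D)"
  define \<mu> where "\<mu> = (LINT y|D. g y)"
  define m2 where "m2 = (LINT y|D. (g y)\<^sup>2)"
  interpret D: prob_space D by fact
  interpret prob_space M
    unfolding M_def using D by (rule prob_space_PiM)
  have [measurable]: "(\<lambda>x. g (x i)) \<in> borel_measurable M" if "i \<in> I" for i
    unfolding M_def using that by measurable
  have integrable_coord: "integrable M (\<lambda>x. g (x i))" if "i \<in> I" for i
    using that bounded by (intro integrable_const_bound[where B=B]) auto
  have integrable_coord_product: "integrable M (\<lambda>x. g (x i) * g (x j))" if "i \<in> I" "j \<in> I" for i j
    using that bounded
    by (intro integrable_const_bound[where B="B * B"])
       (auto simp: abs_mult intro!: AE_I2 mult_mono order_trans[OF abs_ge_zero bounded])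
  have "integrable D g"
    using bounded by (intro D.integrable_const_bound[where B=B]) auto
  hence expectation_coord_product:
    "expectation (\<lambda>x. g (x i) * g (x j)) = \<mu>\<^sup>2 + (if i = j then m2 - \<mu>\<^sup>2 else 0)"
    if "i \<in> I" "j \<in> I" for i j
    using that D I integral_PiM_coordinate[OF D that(1), of "\<lambda>y. g y * g y"]
    by (auto simp: M_def \<mu>_def m2_def power2_eq_square integral_PiM_coordinate_pair)
  have S_square: "(S x)\<^sup>2 = (\<Sum>i\<in>I. \<Sum>j\<in>I. g (x i) * g (x j))" for x
    unfolding S_def power2_eq_square by (simp add: sum_product)
  have integrable_S: "integrable M S"
    unfolding S_def by (intro Bochner_Integration.integrable_sum integrable_coord)
  show integrable_S_square: "integrable M (\<lambda>x. (S x)\<^sup>2)"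
    unfolding S_square
    by (intro Bochner_Integration.integrable_sum integrable_coord_product)
  have "expectation S = (\<Sum>i\<in>I. expectation (\<lambda>x. g (x i)))"
    unfolding S_def by (intro Bochner_Integration.integral_sum integrable_coord)
  thus expectation_S: "expectation S = card I * \<mu>"
    using integral_PiM_coordinate[OF D, of _ I g] by (simp add: M_def \<mu>_def)
  have "expectation (\<lambda>x. (S x)\<^sup>2) = (card I)\<^sup>2 * \<mu>\<^sup>2 + card I * (m2 - \<mu>\<^sup>2)"
    unfolding S_square using I
    by (simp add: Bochner_Integration.integral_sum integrable_coord_product expectation_coord_product
        sum.distrib power2_eq_square algebra_simps)
  hence "variance S = card I * (m2 - \<mu>\<^sup>2)"
    using expectation_S unfolding variance_eq[OF integrable_S integrable_S_square]
    by (simp add: power_mult_distrib)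
  thus "expectation (\<lambda>x. (S x - card I * \<mu>)\<^sup>2) = card I * (m2 - \<mu>\<^sup>2)"
    using expectation_S by simp
qed

lemma measure_PiM_sum_deviation_le:
  fixes g :: "'a \<Rightarrow> real"
  assumes D: "prob_space D" and I: "finite I" and g: "g \<in> borel_measurable D"
    and bounded: "\<And>y. \<bar>g y\<bar> \<le> B" and "a > 0"
  shows "measure (PiM I (\<lambda>_. D)) {x\<in>space (PiM I (\<lambda>_. D)). a \<le> \<bar>(\<Sum>i\<in>I. g (x i)) - card I * (LINT y|D. g y)\<bar>}
           \<le> card I * (LINT y|D. (g y)\<^sup>2) / a\<^sup>2"
proof -
  interpret prob_space "PiM I (\<lambda>_. D)"
    using D by (rule prob_space_PiM)
  note moments = mean_variance_PiM_sum[OF D I g bounded]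
  have "measure (PiM I (\<lambda>_. D)) {x\<in>space (PiM I (\<lambda>_. D)). a \<le> \<bar>(\<Sum>i\<in>I. g (x i)) - card I * (LINT y|D. g y)\<bar>}
      \<le> card I * ((LINT y|D. (g y)\<^sup>2) - (LINT y|D. g y)\<^sup>2) / a\<^sup>2"
    using Chebyshev_inequality[OF _ moments(1) \<open>a > 0\<close>] g I moments(2,3) by simp
  also have "\<dots> \<le> card I * (LINT y|D. (g y)\<^sup>2) / a\<^sup>2"
    by (intro divide_right_mono mult_left_mono) auto
  finally show ?thesis .
qed

(* Unless some Y (x i) reaches L, the sum equals its truncation at L, which Chebyshev controls. *)
lemma measure_PiM_sum_le_ge:
  fixes Y :: "'a \<Rightarrow> real"
  assumes D: "prob_space D" and Y[measurable]: "Y \<in> borel_measurable D" and Y_nonneg: "\<And>y. 0 \<le> Y y"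
    and I: "finite I" and "T > 0" and mean: "card I * (LINT y|D. min (Y y) L) \<le> T / 2"
  shows "measure (PiM I (\<lambda>_. D)) {x\<in>space (PiM I (\<lambda>_. D)). (\<Sum>i\<in>I. Y (x i)) \<le> T}
    \<ge> 1 - card I * measure D {y\<in>space D. L \<le> Y y} - card I * (LINT y|D. (min (Y y) L)\<^sup>2) / (T / 2)\<^sup>2"
proof -
  define M where "M = PiM I (\<lambda>_. D)"
  define E where "E = {x\<in>space M. (\<Sum>i\<in>I. Y (x i)) \<le> T}"
  define B where "B = {x\<in>space M. \<exists>i\<in>I. x i \<in> {y\<in>space D. L \<le> Y y}}"
  define C where "C = {x\<in>space M. T / 2 \<le> \<bar>(\<Sum>i\<in>I. min (Y (x i)) L) - card I * (LINT y|D. min (Y y) L)\<bar>}"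
  interpret prob_space M
    unfolding M_def using D by (rule prob_space_PiM)
  have events: "E \<in> events" "B \<in> events" "C \<in> events"
    unfolding E_def B_def C_def M_def using I by measurable
  have "space M - E \<subseteq> B \<union> C"
  proof
    fix x assume x: "x \<in> space M - E"
    show "x \<in> B \<union> C"
    proof (cases "\<exists>i\<in>I. L \<le> Y (x i)")
      case True
      then show ?thesis
        using x by (auto simp: B_def M_def space_PiM PiE_iff)
    next
      case False
      hence "(\<Sum>i\<in>I. min (Y (x i)) L) = (\<Sum>i\<in>I. Y (x i))"
        by (intro sum.cong) auto
      moreover have "T < (\<Sum>i\<in>I. Y (x i))"
        using x by (auto simp: E_def)
      ultimately have "T / 2 \<le> \<bar>(\<Sum>i\<in>I. min (Y (x i)) L) - card I * (LINT y|D. min (Y y) L)\<bar>"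
        using mean by linarith
      then show ?thesis
        using x by (simp add: C_def)
    qed
  qed
  hence "1 - prob E \<le> prob B + prob C"
    using events by (subst prob_compl[symmetric]) (auto intro!: order_trans[OF finite_measure_mono measure_Un_le])
  also have "prob B \<le> card I * measure D {y\<in>space D. L \<le> Y y}"
    unfolding B_def M_def using D I by (intro measure_PiM_ex_coordinate_le) auto
  also have "prob C \<le> card I * (LINT y|D. (min (Y y) L)\<^sup>2) / (T / 2)\<^sup>2"
  proof -
    have "\<bar>min (Y y) L\<bar> \<le> \<bar>L\<bar>" for y
      using Y_nonneg[of y] by (auto simp: min_def)
    thus ?thesis
      unfolding C_def M_def using D I \<open>T > 0\<close>
      by (intro measure_PiM_sum_deviation_le[where B="\<bar>L\<bar>"]) auto
  qed
  finally show ?thesis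
    unfolding E_def M_def by simp
qed

lemma ex_pow2_between:
  fixes T :: real
  assumes "1 \<le> T"
  obtains K :: nat where "T \<le> 2 ^ K" "2 ^ K \<le> 2 * T" "K \<le> log 2 T + 1"
proof
  define K where "K = nat \<lceil>log 2 T\<rceil>"
  have "0 \<le> log 2 T"
    using assms by simp
  hence K: "log 2 T \<le> K" "K \<le> log 2 T + 1"
    unfolding K_def by linarith+
  thus "K \<le> log 2 T + 1"
    by simp
  have "T = 2 powr log 2 T"
    using assms by simp
  also have "\<dots> \<le> 2 powr K"
    using K by (intro powr_mono) auto
  finally show "T \<le> 2 ^ K"
    by (simp add: powr_realpow)
  have "2 powr K \<le> 2 powr (log 2 T + 1)"
    using K by (intro powr_mono) auto
  also have "\<dots> = 2 * T"
    using assms by (simp add: powr_add)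
  finally show "2 ^ K \<le> 2 * T"
    by (simp add: powr_realpow)
qed

lemma measure_PiM_sum_le_ge_heavy_tail:
  fixes Y :: "'a \<Rightarrow> real" and c T :: real
  assumes D: "prob_space D" and Y: "Y \<in> borel_measurable D" and Y_nonneg: "\<And>y. 0 \<le> Y y"
    and "0 \<le> c" and tail: "\<And>t. t > 0 \<Longrightarrow> measure D {y\<in>space D. t \<le> Y y} \<le> c / t"
    and I: "finite I" and "T \<ge> 1" and small: "card I * (1 + c * (log 2 T + 1)) \<le> T / 2"
  shows "measure (PiM I (\<lambda>_. D)) {x\<in>space (PiM I (\<lambda>_. D)). (\<Sum>i\<in>I. Y (x i)) \<le> T}
    \<ge> 1 - card I * (25 * c + 4) / T"
proof -
  interpret D: prob_space D by fact
  obtain K :: nat where "T \<le> 2 ^ K" "2 ^ K \<le> 2 * T" and K: "K \<le> log 2 T + 1"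
    using ex_pow2_between[OF \<open>T \<ge> 1\<close>] .
  define L :: real where "L = 2 ^ K"
  define n where "n = real (card I)"
  have "T \<le> L" "L \<le> 2 * T"
    unfolding L_def by fact+
  have "c * K \<le> c * (log 2 T + 1)"
    using K \<open>0 \<le> c\<close> by (intro mult_left_mono) auto
  hence "n * (LINT y|D. min (Y y) L) \<le> n * (1 + c * (log 2 T + 1))"
    unfolding L_def n_def using D.expectation_truncated_le_log[OF Y Y_nonneg tail, of K]
    by (intro mult_left_mono) auto
  hence mean: "n * (LINT y|D. min (Y y) L) \<le> T / 2"
    using small[folded n_def] by linarith
  have "c / L \<le> c / T"
    using \<open>T \<le> L\<close> \<open>T \<ge> 1\<close> \<open>0 \<le> c\<close> by (intro divide_left_mono) auto
  hence "n * measure D {y\<in>space D. L \<le> Y y} \<le> n * (c / T)"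
    using tail[of L] \<open>T \<le> L\<close> \<open>T \<ge> 1\<close> by (intro mult_left_mono) (auto simp: n_def)
  moreover have "n * (LINT y|D. (min (Y y) L)\<^sup>2) / (T / 2)\<^sup>2 \<le> n * (4 + 24 * c) / T"
  proof -
    have "3 * c * L \<le> 3 * c * (2 * T)"
      using \<open>L \<le> 2 * T\<close> \<open>0 \<le> c\<close> by (intro mult_left_mono) auto
    moreover have "(LINT y|D. (min (Y y) L)\<^sup>2) \<le> 1 + 3 * c * L"
      unfolding L_def by (rule D.expectation_truncated_square_le[OF Y Y_nonneg \<open>0 \<le> c\<close> tail])
    ultimately have "(LINT y|D. (min (Y y) L)\<^sup>2) \<le> T * (1 + 6 * c)"
      using \<open>T \<ge> 1\<close> by (simp add: algebra_simps)
    hence "n * (LINT y|D. (min (Y y) L)\<^sup>2) / (T / 2)\<^sup>2 \<le> n * (T * (1 + 6 * c)) / (T / 2)\<^sup>2"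
      by (intro divide_right_mono mult_left_mono) (auto simp: n_def)
    also have "\<dots> = n * (4 + 24 * c) / T"
      using \<open>T \<ge> 1\<close> by (simp add: field_simps power2_eq_square)
    finally show ?thesis .
  qed
  moreover have "n * (c / T) + n * (4 + 24 * c) / T = n * (25 * c + 4) / T"
    by (simp add: add_divide_distrib[symmetric] algebra_simps)
  ultimately show ?thesis
    using measure_PiM_sum_le_ge[OF D Y Y_nonneg I _ mean[unfolded n_def]] \<open>T \<ge> 1\<close>
    unfolding n_def by linarith
qed

lemma ln_3_ge: "109 / 100 \<le> ln (3::real)"
proof -
  have "exp (-(9 / 100)) \<ge> 1 - (9 / 100 :: real)"
    using exp_ge_add_one_self[of "-(9 / 100)"] by simp
  hence "exp (9 / 100 :: real) \<le> 100 / 91"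
    by (simp add: exp_minus field_simps)
  have "exp (109 / 100 :: real) = exp 1 * exp (9 / 100)"
    by (simp flip: exp_add)
  also have "\<dots> \<le> (272 / 100) * (100 / 91)"
    using e_less_272 \<open>exp (9 / 100) \<le> 100 / 91\<close> by (intro mult_mono) auto
  also have "\<dots> \<le> 3"
    by simp
  finally show ?thesis
    by (subst ln_ge_iff) auto
qed

lemma ln_ge_of_3_le:
  assumes "3 \<le> x"
  shows "109 / 100 \<le> ln (x::real)" "1 \<le> x * ln x"
proof -
  show "109 / 100 \<le> ln x"
    using ln_3_ge assms by (metis order_trans ln_le_cancel_iff zero_less_numeral less_le_trans)
  hence "1 * 1 \<le> x * ln x"
    using assms by (intro mult_mono) auto
  thus "1 \<le> x * ln x"
    by simp
qed

lemma ln_2_ge: "1 / 2 \<le> ln (2::real)"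
  using ln_le_minus_one[of "1 / 2 :: real"] by (simp add: ln_div)

lemma ln_ln_ge_of_3_le:
  assumes "3 \<le> x"
  shows "8 / 100 \<le> ln (ln (x::real))"
proof -
  have "109 / 100 \<le> ln x"
    using ln_ge_of_3_le[OF assms] by simp
  hence "ln (1 / ln x) \<le> 1 / ln x - 1"
    by (intro ln_le_minus_one) auto
  moreover have "1 / ln x \<le> 100 / 109"
    using \<open>109 / 100 \<le> ln x\<close> by (simp add: field_simps)
  ultimately show ?thesis
    using \<open>109 / 100 \<le> ln x\<close> by (simp add: ln_div)
qed

lemma log2_le_two_ln:
  assumes "1 \<le> x"
  shows "log 2 x \<le> 2 * ln (x::real)"
proof -
  have "ln x * 1 \<le> ln x * (2 * ln 2)"
    using assms ln_2_ge by (intro mult_left_mono) auto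
  thus ?thesis
    using ln_2_ge by (simp add: log_def divide_simps mult_ac)
qed

lemma threshold_bounds:
  assumes "3 \<le> x"
  shows "x * (1 + 8 * (log 2 (4096 * x * ln x) + 1)) \<le> 4096 * x * ln (x::real) / 2"
    and "x * (25 * 8 + 4) / (4096 * x * ln x) \<le> ln (ln x) / ln x"
proof -
  note ln_x = ln_ge_of_3_le[OF assms]
  have "ln (4096::real) = 12 * ln 2"
    using ln_realpow[of 2 12] by simp
  also have "\<dots> \<le> 12"
    using ln_le_minus_one[of "2::real"] by simp
  finally have "ln (4096 * x * ln x) \<le> 12 + 2 * ln x"
    using assms ln_x ln_le_minus_one[of "ln x"] by (simp add: ln_mult)
  moreover have "log 2 (4096 * x * ln x) \<le> 2 * ln (4096 * x * ln x)"
    using ln_x by (intro log2_le_two_ln) simp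
  ultimately have "1 + 8 * (log 2 (4096 * x * ln x) + 1) \<le> 2048 * ln x"
    using ln_x by argo
  thus "x * (1 + 8 * (log 2 (4096 * x * ln x) + 1)) \<le> 4096 * x * ln x / 2"
    using assms by (simp add: mult_left_mono)
  show "x * (25 * 8 + 4) / (4096 * x * ln x) \<le> ln (ln x) / ln x"
    using assms ln_x ln_ln_ge_of_3_le[OF assms] by (simp add: divide_simps)
qed

theorem mainTheorem12:
  fixes p :: real
  assumes "1 \<le> p" and "p < 2"
  shows "\<exists>U>0. \<forall>D. std_sym_stable p D \<longrightarrow>
           (\<forall>n::nat. n \<ge> 3 \<longrightarrow>
              measure (PiM {1..n} (\<lambda>_. D))
                {x \<in> space (PiM {1..n} (\<lambda>_. D)).
                   (\<Sum>i=1..n. \<bar>x i\<bar> powr p) \<le> U * real n * ln (real n)}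
              \<ge> 1 - ln (ln (real n)) / ln (real n))"
proof (intro exI[of _ 4096] conjI allI impI)
  fix D and n :: nat
  assume stable: "std_sym_stable p D" and "3 \<le> n"
  hence "3 \<le> real n"
    by simp
  note bounds = threshold_bounds[OF this] and ln_n = ln_ge_of_3_le[OF this]
  have D: "prob_space D" and "sets D = sets borel"
    using stable by (simp_all add: std_sym_stable_def)
  hence Y: "(\<lambda>y. \<bar>y\<bar> powr p) \<in> borel_measurable D"
    by (simp add: measurable_cong_sets[OF \<open>sets D = sets borel\<close> refl])
  have tail: "measure D {y\<in>space D. t \<le> \<bar>y\<bar> powr p} \<le> 8 / t" if "t > 0" for t
    using std_sym_stable_powr_tail[OF stable _ _ that] assms by simp
  have "1 - real (card {1..n}) * (25 * 8 + 4) / (4096 * real n * ln (real n))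
      \<le> measure (PiM {1..n} (\<lambda>_. D))
          {x\<in>space (PiM {1..n} (\<lambda>_. D)). (\<Sum>i=1..n. \<bar>x i\<bar> powr p) \<le> 4096 * real n * ln (real n)}"
    by (rule measure_PiM_sum_le_ge_heavy_tail[OF D Y _ _ tail]) (use bounds(1) ln_n in auto)
  thus "1 - ln (ln (real n)) / ln (real n) \<le> measure (PiM {1..n} (\<lambda>_. D))
      {x\<in>space (PiM {1..n} (\<lambda>_. D)). (\<Sum>i=1..n. \<bar>x i\<bar> powr p) \<le> 4096 * real n * ln (real n)}"
    using bounds(2) by simp
qed simp

end
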